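(* Let $(B_1;R_1),(B_2;R_2)\in\mathcal C$, let $A_0=B_1\cap B_2$, and suppose $R_1|A_0=R_2|A_0$ and $A_0\le(B_i;R_i)$ for $i=1,2$. Let $C=B_1\cup B_2$ with $R=R_1\cup R_2$, and let $d_C$ be the dimension function of $PG(C;R)$. For $X\subseteq C$ let $\eta(X)=d_1(X\cap B_1)+d_2(X\cap B_2)-d_0(X\cap A_0)$, where $d_i$ is the dimension function of $PG(B_i;R_i)$ and $d_0$ that of $PG(A_0;R_1|A_0)$, and let $\zeta(X)=\min\{\eta(Y):X\subseteq Y\subseteq C\}$. Then $d_C(X)=\zeta(X)$ for all $X\subseteq C$. Moreover, if $C'$ is any pregeometry on the set $C$ whose restrictions to $B_1$ and to $B_2$ are $PG(B_1;R_1)$ and $PG(B_2;R_2)$ respectively, then its dimension function satisfies $d_{C'}(X)\le\zeta(X)$ for all $X\subseteq C$.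
   Context: A set system is a pair $(A;R)$ where $R$ is a set of finite non-empty subsets of $A$; for $X\subseteq A$, $R[X]=\{r\in R:r\subseteq X\}$ and $\delta(X)=|X|-|R[X]|$; for $B\subseteq A$, $R|B=R[B]$. $\mathcal C$ is the class of finite set systems with $\delta(X)\ge0$ for all $X\subseteq A$. $X\le(A;R)$ means $\delta(X)\le\delta(X')$ for all $X\subseteq X'\subseteq A$. For a set system $(A;R)$ with $\delta\ge0$, $d(X)=\min\{\delta(Y):X\subseteq Y\subseteq A\}$, $\mathrm{cl}(X)=\{y:d(X\cup\{y\})=d(X)\}$, and $PG(A;R)$ is the pregeometry $(A,\mathrm{cl})$ with dimension function $d$. (Under the hypotheses, $(C;R)\in\mathcal C$.) The restriction of a pregeometry $(C,\mathrm{cl}')$ to $B\subseteq C$ has closure $X\mapsto\mathrm{cl}'(X)\cap B$. *)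

theory Defs
  imports Main
begin

definition restr :: "'a set set \<Rightarrow> 'a set \<Rightarrow> 'a set set" where
  "restr R X = {r \<in> R. r \<subseteq> X}"

definition delta :: "'a set set \<Rightarrow> 'a set \<Rightarrow> int" where
  "delta R X = int (card X) - int (card (restr R X))"

definition in_C :: "'a set \<Rightarrow> 'a set set \<Rightarrow> bool" where
  "in_C A R \<longleftrightarrow> finite A \<and> (\<forall>r\<in>R. finite r \<and> r \<noteq> {} \<and> r \<subseteq> A)
     \<and> (\<forall>X. X \<subseteq> A \<longrightarrow> delta R X \<ge> 0)"

definition self_suff :: "'a set \<Rightarrow> 'a set \<Rightarrow> 'a set set \<Rightarrow> bool" where
  "self_suff X A R \<longleftrightarrow> X \<subseteq> A \<and> (\<forall>X'. X \<subseteq> X' \<and> X' \<subseteq> A \<longrightarrow> delta R X \<le> delta R X')"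

definition ss_dim :: "'a set \<Rightarrow> 'a set set \<Rightarrow> 'a set \<Rightarrow> int" where
  "ss_dim A R X = Min {delta R Y | Y. X \<subseteq> Y \<and> Y \<subseteq> A}"

definition ss_cl :: "'a set \<Rightarrow> 'a set set \<Rightarrow> 'a set \<Rightarrow> 'a set" where
  "ss_cl A R X = {y \<in> A. ss_dim A R (X \<union> {y}) = ss_dim A R X}"

definition pregeometry :: "'a set \<Rightarrow> ('a set \<Rightarrow> 'a set) \<Rightarrow> bool" where
  "pregeometry C cl \<longleftrightarrow>
     (\<forall>X. X \<subseteq> C \<longrightarrow> X \<subseteq> cl X \<and> cl X \<subseteq> C) \<and>
     (\<forall>X Y. X \<subseteq> Y \<and> Y \<subseteq> C \<longrightarrow> cl X \<subseteq> cl Y) \<and>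
     (\<forall>X. X \<subseteq> C \<longrightarrow> cl (cl X) = cl X) \<and>
     (\<forall>X a b. X \<subseteq> C \<and> a \<in> C \<and> b \<in> C \<and> a \<in> cl (X \<union> {b}) \<and> a \<notin> cl X
          \<longrightarrow> b \<in> cl (X \<union> {a})) \<and>
     (\<forall>X a. X \<subseteq> C \<and> a \<in> cl X \<longrightarrow> (\<exists>X0. finite X0 \<and> X0 \<subseteq> X \<and> a \<in> cl X0))"

definition pg_dim :: "('a set \<Rightarrow> 'a set) \<Rightarrow> 'a set \<Rightarrow> nat" where
  "pg_dim cl X = Min {card Y | Y. Y \<subseteq> X \<and> X \<subseteq> cl Y}"

end

theory Submission
  imports Defs
begin

text \<open>
  Since every relation lies in \<open>B1\<close> or in \<open>B2\<close>, the predimension is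
  modular across the amalgam, \<open>\<delta>(Y) = \<delta>(Y \<inter> B1) + \<delta>(Y \<inter> B2) - \<delta>(Y \<inter> A0)\<close>, whereas
  in general it is only submodular. Submodularity applied to sets realising the three dimensions
  of the traces of \<open>Y\<close> gives \<open>d_C(X) \<le> \<eta>(Y)\<close>. Conversely, on the largest set \<open>Z\<close> realising
  \<open>d_C(X)\<close> each trace of \<open>Z\<close> realises its own dimension, so modularity gives \<open>\<eta>(Z) = d_C(X)\<close>.

  For the second part take \<open>S0 \<subseteq> Y \<inter> A0\<close> with \<open>d0(Y \<inter> A0)\<close> elements and the same dimension, and
  extend it greedily inside \<open>Y \<inter> Bi\<close> to a set \<open>Si\<close> of full dimension, paying one element per
  unit of dimension gained. Self-sufficiency of \<open>A0\<close> gives \<open>di(S0) \<ge> d0(S0)\<close>, whence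
  \<open>|S1 \<union> S2| \<le> \<eta>(Y)\<close>; and \<open>S1 \<union> S2\<close> spans \<open>Y\<close> in every pregeometry on \<open>C\<close> restricting to
  \<open>PG(Bi;Ri)\<close>, whose dimension is bounded by the size of any spanning set by the exchange axiom.
\<close>

section \<open>Predimension and dimension of a finite set system\<close>

lemma finite_restr: "finite X \<Longrightarrow> finite (restr R X)"
  unfolding restr_def by (rule finite_subset[of _ "Pow X"]) auto

lemma restr_Int: "restr R (X \<inter> Y) = restr R X \<inter> restr R Y"
  unfolding restr_def by blast

lemma delta_restr: "W \<subseteq> A \<Longrightarrow> delta (restr R A) W = delta R W"
  unfolding delta_def restr_def by (metis (no_types, lifting) mem_Collect_eq subset_trans)

lemma delta_Un_Int:
  assumes "finite X" "finite Y"
  shows "delta R (X \<union> Y) + delta R (X \<inter> Y)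
           = delta R X + delta R Y - int (card (restr R (X \<union> Y) - (restr R X \<union> restr R Y)))"
proof -
  have sub: "restr R X \<union> restr R Y \<subseteq> restr R (X \<union> Y)"
    unfolding restr_def by blast
  have fin: "finite (restr R X)" "finite (restr R Y)" "finite (restr R (X \<union> Y))"
    using assms finite_restr by blast+
  have "card (restr R (X \<union> Y) - (restr R X \<union> restr R Y))
          = card (restr R (X \<union> Y)) - card (restr R X \<union> restr R Y)"
    using sub fin by (intro card_Diff_subset) auto
  moreover have "card (restr R X \<union> restr R Y) \<le> card (restr R (X \<union> Y))"
    using sub fin by (intro card_mono)
  moreover have "card (restr R X \<union> restr R Y) + card (restr R (X \<inter> Y)) = card (restr R X) + card (restr R Y)"
    using card_Un_Int[OF fin(1,2)] by (simp add: restr_Int)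
  moreover have "card (X \<union> Y) + card (X \<inter> Y) = card X + card Y"
    using card_Un_Int[OF assms] by simp
  ultimately show ?thesis
    unfolding delta_def by linarith
qed

lemma delta_submodular:
  "finite X \<Longrightarrow> finite Y \<Longrightarrow> delta R (X \<union> Y) + delta R (X \<inter> Y) \<le> delta R X + delta R Y"
  using delta_Un_Int by fastforce

lemma delta_modular:
  assumes "finite X" "finite Y" and "\<forall>r\<in>R. r \<subseteq> X \<union> Y \<longrightarrow> r \<subseteq> X \<or> r \<subseteq> Y"
  shows "delta R (X \<union> Y) + delta R (X \<inter> Y) = delta R X + delta R Y"
proof -
  have no_straddle: "restr R (X \<union> Y) - (restr R X \<union> restr R Y) = {}"
    using assms(3) unfolding restr_def by blast
  show ?thesis
    using delta_Un_Int[OF assms(1,2), of R] unfolding no_straddle by simp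
qed

lemma finite_image_supersets: "finite A \<Longrightarrow> finite {f Y | Y. X \<subseteq> Y \<and> Y \<subseteq> A}"
  by (rule finite_subset[of _ "f ` Pow A"]) auto

lemma ss_dim_le: "finite A \<Longrightarrow> X \<subseteq> Y \<Longrightarrow> Y \<subseteq> A \<Longrightarrow> ss_dim A R X \<le> delta R Y"
  unfolding ss_dim_def by (rule Min_le) (auto simp: finite_image_supersets)

lemma ss_dim_attained:
  "finite A \<Longrightarrow> X \<subseteq> A \<Longrightarrow> \<exists>Y. X \<subseteq> Y \<and> Y \<subseteq> A \<and> ss_dim A R X = delta R Y"
proof -
  assume "finite A" "X \<subseteq> A"
  then have "ss_dim A R X \<in> {delta R Y | Y. X \<subseteq> Y \<and> Y \<subseteq> A}"
    unfolding ss_dim_def by (intro Min_in finite_image_supersets) auto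
  then show ?thesis by blast
qed

lemma ss_dim_mono: "finite A \<Longrightarrow> X \<subseteq> Y \<Longrightarrow> Y \<subseteq> A \<Longrightarrow> ss_dim A R X \<le> ss_dim A R Y"
  by (metis ss_dim_attained ss_dim_le order_trans)

lemma ss_dim_submodular:
  assumes "finite A" "X \<subseteq> A" "Y \<subseteq> A"
  shows "ss_dim A R (X \<union> Y) + ss_dim A R (X \<inter> Y) \<le> ss_dim A R X + ss_dim A R Y"
proof -
  obtain V W where V: "X \<subseteq> V" "V \<subseteq> A" "ss_dim A R X = delta R V"
    and W: "Y \<subseteq> W" "W \<subseteq> A" "ss_dim A R Y = delta R W"
    using ss_dim_attained assms by metis
  have "ss_dim A R (X \<union> Y) \<le> delta R (V \<union> W)" "ss_dim A R (X \<inter> Y) \<le> delta R (V \<inter> W)"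
    using V W assms(1) by (intro ss_dim_le; blast)+
  moreover have "delta R (V \<union> W) + delta R (V \<inter> W) \<le> delta R V + delta R W"
    using V W assms(1) by (intro delta_submodular) (auto intro: finite_subset)
  ultimately show ?thesis
    using V W by linarith
qed

lemma ss_dim_cong:
  "(\<And>W. W \<subseteq> A \<Longrightarrow> delta R W = delta R' W) \<Longrightarrow> ss_dim A R = ss_dim A R'"
  unfolding ss_dim_def setcompr_eq_image by (intro ext arg_cong[where f = Min] image_cong) auto

lemma ss_cl_cong:
  assumes "\<And>W. W \<subseteq> A \<Longrightarrow> delta R W = delta R' W"
  shows "ss_cl A R = ss_cl A R'"
  by (intro ext) (simp add: ss_cl_def ss_dim_cong[OF assms])

lemma self_suff_cong:
  assumes "\<And>W. W \<subseteq> B \<Longrightarrow> delta R W = delta R' W"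
  shows "self_suff A B R = self_suff A B R'"
  unfolding self_suff_def by (auto simp: assms)

lemma ss_dim_le_if_self_suff:
  assumes "finite B" and ss: "self_suff A B R" and "Z \<subseteq> A"
  shows "ss_dim A R Z \<le> ss_dim B R Z"
proof -
  have AB: "A \<subseteq> B"
    using ss unfolding self_suff_def by blast
  obtain W where W: "Z \<subseteq> W" "W \<subseteq> B" "ss_dim B R Z = delta R W"
    using ss_dim_attained[OF \<open>finite B\<close>] \<open>Z \<subseteq> A\<close> AB by (metis order_trans)
  have "delta R (W \<union> A) + delta R (W \<inter> A) \<le> delta R W + delta R A"
    using W(2) AB \<open>finite B\<close> by (intro delta_submodular) (auto intro: finite_subset)
  moreover have "delta R A \<le> delta R (W \<union> A)"
    using ss W(2) unfolding self_suff_def by blast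
  moreover have "ss_dim A R Z \<le> delta R (W \<inter> A)"
    using W \<open>Z \<subseteq> A\<close> AB \<open>finite B\<close> by (intro ss_dim_le) (auto intro: finite_subset)
  ultimately show ?thesis
    using W(3) by linarith
qed

lemma ss_dim_insert_eq:
  assumes "finite A" "S \<subseteq> U" "U \<subseteq> A" "z \<in> A" and eq: "ss_dim A R S = ss_dim A R U"
  shows "ss_dim A R (insert z S) = ss_dim A R (insert z U)"
proof -
  have "insert z S \<union> U = insert z U"
    using assms(2) by auto
  then have "ss_dim A R (insert z U) + ss_dim A R (insert z S \<inter> U) \<le> ss_dim A R (insert z S) + ss_dim A R U"
    using assms(1-4) ss_dim_submodular[of A "insert z S" U R] by auto
  moreover have "ss_dim A R S \<le> ss_dim A R (insert z S \<inter> U)"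
    using assms(1-3) by (intro ss_dim_mono) auto
  moreover have "ss_dim A R (insert z S) \<le> ss_dim A R (insert z U)"
    using assms(1-4) by (intro ss_dim_mono) auto
  ultimately show ?thesis
    using eq by linarith
qed

lemma ss_dim_spanning_insert:
  assumes "finite A" "S \<subseteq> U" "U \<subseteq> A" "z \<in> A" and eq: "ss_dim A R S = ss_dim A R U"
  obtains S' where "S \<subseteq> S'" "S' \<subseteq> insert z S" "ss_dim A R S' = ss_dim A R (insert z U)"
    and "int (card S') - int (card S) \<le> ss_dim A R (insert z U) - ss_dim A R U"
proof (cases "ss_dim A R (insert z U) = ss_dim A R U")
  case True
  then show ?thesis
    using that[of S] eq by auto
next
  case False
  have "ss_dim A R U \<le> ss_dim A R (insert z U)"
    using assms(1,3,4) by (intro ss_dim_mono) auto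
  moreover have "finite S"
    using assms(1-3) by (meson finite_subset)
  ultimately have "int (card (insert z S)) - int (card S) \<le> ss_dim A R (insert z U) - ss_dim A R U"
    using False by (simp add: card_insert_if)
  then show ?thesis
    using that[of "insert z S"] ss_dim_insert_eq[OF assms] by auto
qed

lemma ss_dim_spanning_extension:
  assumes "finite A" "S0 \<subseteq> Z" "Z \<subseteq> A"
  shows "\<exists>S. S0 \<subseteq> S \<and> S \<subseteq> Z \<and> ss_dim A R S = ss_dim A R Z
           \<and> int (card S) + ss_dim A R S0 \<le> int (card S0) + ss_dim A R Z"
proof -
  have "\<exists>S. S0 \<subseteq> S \<and> S \<subseteq> S0 \<union> W \<and> ss_dim A R S = ss_dim A R (S0 \<union> W)
          \<and> int (card S) + ss_dim A R S0 \<le> int (card S0) + ss_dim A R (S0 \<union> W)"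
    if "finite W" "W \<subseteq> A" for W
    using that
  proof (induction W rule: finite_induct)
    case (insert z W)
    then obtain S where S: "S0 \<subseteq> S" "S \<subseteq> S0 \<union> W" "ss_dim A R S = ss_dim A R (S0 \<union> W)"
      and card_S: "int (card S) + ss_dim A R S0 \<le> int (card S0) + ss_dim A R (S0 \<union> W)"
      by auto
    have "S0 \<union> W \<subseteq> A" "z \<in> A"
      using insert.prems assms(2,3) by auto
    then obtain S' where "S \<subseteq> S'" "S' \<subseteq> insert z S" "ss_dim A R S' = ss_dim A R (insert z (S0 \<union> W))"
      and "int (card S') - int (card S) \<le> ss_dim A R (insert z (S0 \<union> W)) - ss_dim A R (S0 \<union> W)"
      using ss_dim_spanning_insert[OF assms(1) S(2) _ _ S(3)] by blast
    with S card_S show ?case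
      by (intro exI[of _ S']) auto
  qed (rule exI[of _ S0], simp)
  moreover have "finite Z" "S0 \<union> Z = Z"
    using assms by (auto intro: finite_subset)
  ultimately show ?thesis
    using assms(3) by metis
qed

lemma subset_ss_cl_if_ss_dim_eq:
  assumes "finite A" "S \<subseteq> Z" "Z \<subseteq> A" "ss_dim A R S = ss_dim A R Z"
  shows "Z \<subseteq> ss_cl A R S"
proof
  fix z assume "z \<in> Z"
  then have "ss_dim A R S \<le> ss_dim A R (S \<union> {z})" "ss_dim A R (S \<union> {z}) \<le> ss_dim A R Z"
    using assms(1-3) by (intro ss_dim_mono; auto)+
  then show "z \<in> ss_cl A R S"
    using assms \<open>z \<in> Z\<close> unfolding ss_cl_def by auto
qed

lemma ss_dim_maximal_witness:
  assumes "finite A" "X \<subseteq> A"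
  obtains Z where "X \<subseteq> Z" "Z \<subseteq> A" "delta R Z = ss_dim A R X"
    and "\<And>W. W \<subseteq> A \<Longrightarrow> delta R W \<le> delta R (Z \<inter> W) \<Longrightarrow> W \<subseteq> Z"
proof -
  define witnesses where "witnesses = {Z. X \<subseteq> Z \<and> Z \<subseteq> A \<and> delta R Z = ss_dim A R X}"
  have "finite witnesses"
    unfolding witnesses_def by (rule finite_subset[of _ "Pow A"]) (use assms(1) in auto)
  moreover have "witnesses \<noteq> {}"
    using ss_dim_attained[OF assms, of R] unfolding witnesses_def by (metis (mono_tags) empty_iff mem_Collect_eq)
  ultimately obtain Z where Z: "Z \<in> witnesses" and max: "\<And>Z'. Z' \<in> witnesses \<Longrightarrow> Z \<subseteq> Z' \<Longrightarrow> Z = Z'"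
    using finite_has_maximal[of witnesses] by blast
  show ?thesis
  proof (rule that)
    show "X \<subseteq> Z" "Z \<subseteq> A" "delta R Z = ss_dim A R X"
      using Z unfolding witnesses_def by auto
    fix W assume W: "W \<subseteq> A" "delta R W \<le> delta R (Z \<inter> W)"
    have "delta R (Z \<union> W) + delta R (Z \<inter> W) \<le> delta R Z + delta R W"
      using \<open>Z \<subseteq> A\<close> W(1) assms(1) by (intro delta_submodular) (auto intro: finite_subset)
    moreover have "ss_dim A R X \<le> delta R (Z \<union> W)"
      using \<open>X \<subseteq> Z\<close> \<open>Z \<subseteq> A\<close> W(1) assms(1) by (intro ss_dim_le) auto
    ultimately have "Z \<union> W \<in> witnesses"
      using \<open>X \<subseteq> Z\<close> \<open>Z \<subseteq> A\<close> \<open>delta R Z = ss_dim A R X\<close> W unfolding witnesses_def by auto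
    then show "W \<subseteq> Z"
      using max by blast
  qed
qed

lemma ss_dim_Int_eq_delta:
  assumes "finite A" "T \<subseteq> A"
    and closed: "\<And>W. W \<subseteq> A \<Longrightarrow> delta R W \<le> delta R (Z \<inter> W) \<Longrightarrow> W \<subseteq> Z"
  shows "ss_dim T R (Z \<inter> T) = delta R (Z \<inter> T)"
proof -
  have "finite T"
    using assms(1,2) by (rule finite_subset[rotated])
  then obtain V where V: "Z \<inter> T \<subseteq> V" "V \<subseteq> T" "ss_dim T R (Z \<inter> T) = delta R V"
    using ss_dim_attained by (metis inf_le2)
  have "Z \<inter> V = Z \<inter> T"
    using V(1,2) by blast
  then have "delta R V \<le> delta R (Z \<inter> V)"
    using V ss_dim_le[OF \<open>finite T\<close>, of "Z \<inter> T" "Z \<inter> T" R] by simp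
  then have "V \<subseteq> Z"
    using V(2) assms(2) by (intro closed) auto
  then have "V = Z \<inter> T"
    using V(1,2) by blast
  then show ?thesis
    using V(3) by simp
qed

section \<open>Spanning sets in a pregeometry\<close>

lemma pregeometry_extensive: "pregeometry C cl \<Longrightarrow> X \<subseteq> C \<Longrightarrow> X \<subseteq> cl X"
  unfolding pregeometry_def by simp

lemma pregeometry_mono: "pregeometry C cl \<Longrightarrow> X \<subseteq> Y \<Longrightarrow> Y \<subseteq> C \<Longrightarrow> cl X \<subseteq> cl Y"
  unfolding pregeometry_def by simp

lemma pregeometry_cl_subset_cl:
  assumes "pregeometry C cl" "S \<subseteq> C" "T \<subseteq> cl S"
  shows "cl T \<subseteq> cl S"
proof -
  have "cl S \<subseteq> C" "cl (cl S) = cl S"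
    using assms(1,2) unfolding pregeometry_def by simp_all
  moreover have "cl T \<subseteq> cl (cl S)"
    using assms(1,3) \<open>cl S \<subseteq> C\<close> unfolding pregeometry_def by simp
  ultimately show ?thesis by simp
qed

lemma pregeometry_exchange:
  assumes "pregeometry C cl" "X \<subseteq> C" "a \<in> C" "b \<in> C" "a \<in> cl (insert b X)" "a \<notin> cl X"
  shows "b \<in> cl (insert a X)"
proof -
  have exchange: "\<forall>X a b. X \<subseteq> C \<and> a \<in> C \<and> b \<in> C \<and> a \<in> cl (X \<union> {b}) \<and> a \<notin> cl X
          \<longrightarrow> b \<in> cl (X \<union> {a})"
    using assms(1) unfolding pregeometry_def by (elim conjE) assumption
  show ?thesis
    using exchange[rule_format, of X a b] assms(2-) by simp
qed

lemma pregeometry_exchange_spanning: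
  assumes pg: "pregeometry C cl" and "T \<subseteq> C" "t \<in> T" "x \<in> C" "x \<in> cl T" "x \<notin> cl (T - {t})"
  shows "T \<subseteq> cl (insert x (T - {t}))"
proof -
  have sub: "T - {t} \<subseteq> C" "insert x (T - {t}) \<subseteq> C"
    using assms(2,4) by auto
  have "x \<in> cl (insert t (T - {t}))"
    using assms(3,5) by (simp add: insert_absorb)
  then have "t \<in> cl (insert x (T - {t}))"
    using pregeometry_exchange[OF pg sub(1)] assms(2-4,6) by blast
  moreover have "T - {t} \<subseteq> cl (insert x (T - {t}))"
    using pregeometry_extensive[OF pg sub(2)] by blast
  ultimately show ?thesis
    by blast
qed

lemma pregeometry_spanning_subset:
  assumes pg: "pregeometry C cl" and "finite T" "T \<subseteq> C" "X \<subseteq> C" "X \<subseteq> cl T"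
  shows "\<exists>Y \<subseteq> X. X \<subseteq> cl Y \<and> card Y \<le> card T"
  using assms(2-)
proof (induction "card (T - X)" arbitrary: T rule: less_induct)
  case (less T)
  show ?case
  proof (cases "T \<subseteq> X")
    case True
    then show ?thesis
      using less.prems by blast
  next
    case False
    then obtain t where t: "t \<in> T" "t \<notin> X" by blast
    have fin: "finite (T - {t})" and sub: "T - {t} \<subseteq> C"
      using less.prems by auto
    have card_T: "card T = Suc (card (T - {t}))"
      using card_Suc_Diff1[OF less.prems(1) t(1)] by simp
    have "T - {t} - X = (T - X) - {t}"
      by blast
    then have less_T: "card (T - {t} - X) < card (T - X)"
      using card_Diff1_less[of "T - X" t] less.prems(1) t by simp
    show ?thesis
    proof (cases "X \<subseteq> cl (T - {t})")
      case True
      then show ?thesis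
        using less.hyps[OF less_T fin sub less.prems(3) True] card_T by (auto intro: le_SucI)
    next
      case False
      then obtain x where x: "x \<in> X" "x \<notin> cl (T - {t})" by blast
      define T' where "T' = insert x (T - {t})"
      have T': "finite T'" "T' \<subseteq> C" "card (T' - X) < card (T - X)" "card T' \<le> card T"
        unfolding T'_def using x(1) less_T fin sub less.prems(3) card_T
        by (auto simp: insert_Diff_if card_insert_le_m1)
      have "T \<subseteq> cl T'"
        unfolding T'_def using pregeometry_exchange_spanning[OF pg] less.prems(2-4) t(1) x by blast
      then have "X \<subseteq> cl T'"
        using pregeometry_cl_subset_cl[OF pg T'(2)] less.prems(4) by blast
      then show ?thesis
        using less.hyps[OF T'(3) T'(1,2) less.prems(3)] T'(4) by (meson order_trans)
    qed
  qed
qed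

lemma pg_dim_le_card:
  assumes "pregeometry C cl" "finite T" "T \<subseteq> C" "finite X" "X \<subseteq> C" "X \<subseteq> cl T"
  shows "pg_dim cl X \<le> card T"
proof -
  obtain Y where Y: "Y \<subseteq> X" "X \<subseteq> cl Y" "card Y \<le> card T"
    using pregeometry_spanning_subset[OF assms(1-3,5,6)] by blast
  have "finite {card Y | Y. Y \<subseteq> X \<and> X \<subseteq> cl Y}"
    by (rule finite_subset[of _ "card ` Pow X"]) (use assms(4) in auto)
  then have "pg_dim cl X \<le> card Y"
    unfolding pg_dim_def using Y by (intro Min_le) auto
  with Y(3) show ?thesis
    by simp
qed

section \<open>Free amalgams\<close>

lemma delta_Un_left:
  assumes "\<forall>r\<in>R2. r \<subseteq> B2" "restr R1 (B1 \<inter> B2) = restr R2 (B1 \<inter> B2)" "W \<subseteq> B1"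
  shows "delta (R1 \<union> R2) W = delta R1 W"
proof -
  have "restr (R1 \<union> R2) W = restr R1 W"
  proof
    show "restr (R1 \<union> R2) W \<subseteq> restr R1 W"
    proof
      fix r assume r: "r \<in> restr (R1 \<union> R2) W"
      show "r \<in> restr R1 W"
      proof (cases "r \<in> R1")
        case False
        then have "r \<in> restr R2 (B1 \<inter> B2)"
          using r assms(1,3) unfolding restr_def by blast
        then show ?thesis
          using r assms(2) unfolding restr_def by blast
      qed (use r in \<open>auto simp: restr_def\<close>)
    qed
  qed (auto simp: restr_def)
  then show ?thesis
    unfolding delta_def by simp
qed

lemma delta_Un_right:
  assumes "\<forall>r\<in>R1. r \<subseteq> B1" "restr R1 (B1 \<inter> B2) = restr R2 (B1 \<inter> B2)" "W \<subseteq> B2"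
  shows "delta (R1 \<union> R2) W = delta R2 W"
  using delta_Un_left[of R1 B1 R2 B2 W] assms by (simp add: Int_commute Un_commute)

definition amalgam_dim :: "'a set \<Rightarrow> 'a set \<Rightarrow> 'a set set \<Rightarrow> 'a set \<Rightarrow> int" where
  "amalgam_dim B1 B2 R Y =
     ss_dim B1 R (Y \<inter> B1) + ss_dim B2 R (Y \<inter> B2) - ss_dim (B1 \<inter> B2) R (Y \<inter> (B1 \<inter> B2))"

lemma ss_dim_le_amalgam_dim:
  assumes "finite B1" "finite B2" "X \<subseteq> Y" "Y \<subseteq> B1 \<union> B2"
  shows "ss_dim (B1 \<union> B2) R X \<le> amalgam_dim B1 B2 R Y"
proof -
  obtain W1 where W1: "Y \<inter> B1 \<subseteq> W1" "W1 \<subseteq> B1" "ss_dim B1 R (Y \<inter> B1) = delta R W1"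
    using ss_dim_attained[OF assms(1)] by (meson inf_le2)
  obtain W2 where W2: "Y \<inter> B2 \<subseteq> W2" "W2 \<subseteq> B2" "ss_dim B2 R (Y \<inter> B2) = delta R W2"
    using ss_dim_attained[OF assms(2)] by (meson inf_le2)
  have "ss_dim (B1 \<union> B2) R X \<le> delta R (W1 \<union> W2)"
    using assms W1(1,2) W2(1,2) by (intro ss_dim_le) blast+
  moreover have "delta R (W1 \<union> W2) + delta R (W1 \<inter> W2) \<le> delta R W1 + delta R W2"
    using assms(1,2) W1(2) W2(2) by (intro delta_submodular) (auto intro: finite_subset)
  moreover have "ss_dim (B1 \<inter> B2) R (Y \<inter> (B1 \<inter> B2)) \<le> delta R (W1 \<inter> W2)"
    using assms(1) W1(1,2) W2(1,2) by (intro ss_dim_le) auto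
  ultimately show ?thesis
    unfolding amalgam_dim_def using W1(3) W2(3) by linarith
qed

lemma ss_dim_free_amalgam:
  assumes "finite B1" "finite B2" and free: "\<forall>r\<in>R. r \<subseteq> B1 \<or> r \<subseteq> B2" and "X \<subseteq> B1 \<union> B2"
  shows "ss_dim (B1 \<union> B2) R X = Min {amalgam_dim B1 B2 R Y | Y. X \<subseteq> Y \<and> Y \<subseteq> B1 \<union> B2}"
proof (rule sym, rule Min_eqI)
  show "finite {amalgam_dim B1 B2 R Y | Y. X \<subseteq> Y \<and> Y \<subseteq> B1 \<union> B2}"
    using assms(1,2) by (intro finite_image_supersets) simp
  show "ss_dim (B1 \<union> B2) R X \<le> y" if "y \<in> {amalgam_dim B1 B2 R Y | Y. X \<subseteq> Y \<and> Y \<subseteq> B1 \<union> B2}" for y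
    using that ss_dim_le_amalgam_dim[OF assms(1,2)] by blast
  have fin: "finite (B1 \<union> B2)"
    using assms(1,2) by simp
  \<comment> \<open>the traces of the largest set realising the dimension realise their own dimensions\<close>
  obtain Z where Z: "X \<subseteq> Z" "Z \<subseteq> B1 \<union> B2" "delta R Z = ss_dim (B1 \<union> B2) R X"
    and closed: "\<And>W. W \<subseteq> B1 \<union> B2 \<Longrightarrow> delta R W \<le> delta R (Z \<inter> W) \<Longrightarrow> W \<subseteq> Z"
    using ss_dim_maximal_witness[OF fin assms(4)] by blast
  have "ss_dim B1 R (Z \<inter> B1) = delta R (Z \<inter> B1)" "ss_dim B2 R (Z \<inter> B2) = delta R (Z \<inter> B2)"
    "ss_dim (B1 \<inter> B2) R (Z \<inter> (B1 \<inter> B2)) = delta R (Z \<inter> (B1 \<inter> B2))"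
    using ss_dim_Int_eq_delta[where A = "B1 \<union> B2" and R = R and Z = Z] fin closed by auto
  moreover have "delta R ((Z \<inter> B1) \<union> (Z \<inter> B2)) + delta R ((Z \<inter> B1) \<inter> (Z \<inter> B2))
      = delta R (Z \<inter> B1) + delta R (Z \<inter> B2)"
    using free assms(1,2) by (intro delta_modular) (auto intro: finite_subset)
  moreover have "(Z \<inter> B1) \<union> (Z \<inter> B2) = Z" "(Z \<inter> B1) \<inter> (Z \<inter> B2) = Z \<inter> (B1 \<inter> B2)"
    using Z(2) by auto
  ultimately have "amalgam_dim B1 B2 R Z = ss_dim (B1 \<union> B2) R X"
    unfolding amalgam_dim_def using Z(3) by simp
  then show "ss_dim (B1 \<union> B2) R X \<in> {amalgam_dim B1 B2 R Y | Y. X \<subseteq> Y \<and> Y \<subseteq> B1 \<union> B2}"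
    using Z(1,2) by (auto intro!: exI[of _ Z])
qed

lemma amalgam_spanning_sets:
  assumes "finite B1" "finite B2"
    and ss1: "self_suff (B1 \<inter> B2) B1 R" and ss2: "self_suff (B1 \<inter> B2) B2 R"
    and nonneg: "\<And>W. W \<subseteq> B1 \<inter> B2 \<Longrightarrow> 0 \<le> delta R W"
  obtains S1 S2 where "S1 \<subseteq> Y \<inter> B1" "ss_dim B1 R S1 = ss_dim B1 R (Y \<inter> B1)"
    and "S2 \<subseteq> Y \<inter> B2" "ss_dim B2 R S2 = ss_dim B2 R (Y \<inter> B2)"
    and "int (card (S1 \<union> S2)) \<le> amalgam_dim B1 B2 R Y"
proof -
  let ?A0 = "B1 \<inter> B2"
  have fin: "finite ?A0"
    using assms(1) by simp
  obtain S0 where S0: "S0 \<subseteq> Y \<inter> ?A0" "ss_dim ?A0 R S0 = ss_dim ?A0 R (Y \<inter> ?A0)"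
    and card_S0: "int (card S0) + ss_dim ?A0 R {} \<le> ss_dim ?A0 R (Y \<inter> ?A0)"
    using ss_dim_spanning_extension[OF fin, of "{}" "Y \<inter> ?A0" R] by auto
  have "0 \<le> ss_dim ?A0 R {}"
    using ss_dim_attained[OF fin, of "{}" R] nonneg by force
  obtain S1 where S1: "S0 \<subseteq> S1" "S1 \<subseteq> Y \<inter> B1" "ss_dim B1 R S1 = ss_dim B1 R (Y \<inter> B1)"
    and card_S1: "int (card S1) + ss_dim B1 R S0 \<le> int (card S0) + ss_dim B1 R (Y \<inter> B1)"
    using ss_dim_spanning_extension[OF assms(1), of S0 "Y \<inter> B1" R] S0(1) by auto
  obtain S2 where S2: "S0 \<subseteq> S2" "S2 \<subseteq> Y \<inter> B2" "ss_dim B2 R S2 = ss_dim B2 R (Y \<inter> B2)"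
    and card_S2: "int (card S2) + ss_dim B2 R S0 \<le> int (card S0) + ss_dim B2 R (Y \<inter> B2)"
    using ss_dim_spanning_extension[OF assms(2), of S0 "Y \<inter> B2" R] S0(1) by auto
  \<comment> \<open>self-sufficiency of the base keeps the dimension of S0 from growing in either half\<close>
  have "ss_dim ?A0 R S0 \<le> ss_dim B1 R S0" "ss_dim ?A0 R S0 \<le> ss_dim B2 R S0"
    using S0(1) by (auto intro!: ss_dim_le_if_self_suff assms)
  moreover have "card (S1 \<union> S2) + card S0 \<le> card S1 + card S2"
  proof -
    have "finite S1" "finite S2"
      using S1(2) S2(2) assms(1,2) by (auto intro: finite_subset)
    then have "card (S1 \<union> S2) + card (S1 \<inter> S2) = card S1 + card S2"
      by (rule card_Un_Int[symmetric])
    moreover have "card S0 \<le> card (S1 \<inter> S2)"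
      using S1(1) S2(1) \<open>finite S1\<close> by (intro card_mono) auto
    ultimately show ?thesis
      by linarith
  qed
  ultimately have "int (card (S1 \<union> S2)) \<le> amalgam_dim B1 B2 R Y"
    unfolding amalgam_dim_def using S0(2) card_S0 card_S1 card_S2 \<open>0 \<le> ss_dim ?A0 R {}\<close> by linarith
  with S1 S2 show ?thesis
    using that by blast
qed

lemma pg_dim_le_amalgam_dim:
  assumes "finite B1" "finite B2"
    and "self_suff (B1 \<inter> B2) B1 R" "self_suff (B1 \<inter> B2) B2 R"
    and "\<And>W. W \<subseteq> B1 \<inter> B2 \<Longrightarrow> 0 \<le> delta R W"
    and pg: "pregeometry (B1 \<union> B2) cl"
    and cl1: "\<And>S. S \<subseteq> B1 \<Longrightarrow> cl S \<inter> B1 = ss_cl B1 R S"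
    and cl2: "\<And>S. S \<subseteq> B2 \<Longrightarrow> cl S \<inter> B2 = ss_cl B2 R S"
    and "X \<subseteq> Y" "Y \<subseteq> B1 \<union> B2"
  shows "int (pg_dim cl X) \<le> amalgam_dim B1 B2 R Y"
proof -
  obtain S1 S2 where S1: "S1 \<subseteq> Y \<inter> B1" "ss_dim B1 R S1 = ss_dim B1 R (Y \<inter> B1)"
    and S2: "S2 \<subseteq> Y \<inter> B2" "ss_dim B2 R S2 = ss_dim B2 R (Y \<inter> B2)"
    and card: "int (card (S1 \<union> S2)) \<le> amalgam_dim B1 B2 R Y"
    using amalgam_spanning_sets[OF assms(1-5)] by blast
  let ?T = "S1 \<union> S2"
  have T: "finite ?T" "?T \<subseteq> B1 \<union> B2"
    using S1(1) S2(1) assms(1,2) by (auto intro: finite_subset)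
  have span_half: "Y \<inter> B \<subseteq> cl ?T"
    if "finite B" "B \<subseteq> B1 \<union> B2" "S \<subseteq> Y \<inter> B" "S \<subseteq> ?T" "ss_dim B R S = ss_dim B R (Y \<inter> B)"
      and "cl S \<inter> B = ss_cl B R S" for B S
  proof -
    have "Y \<inter> B \<subseteq> ss_cl B R S"
      using that(1,3,5) by (intro subset_ss_cl_if_ss_dim_eq) auto
    also have "\<dots> \<subseteq> cl S"
      using that(6) by blast
    also have "\<dots> \<subseteq> cl ?T"
      using pregeometry_mono[OF pg that(4) T(2)] .
    finally show ?thesis .
  qed
  have "Y \<inter> B1 \<subseteq> cl ?T" "Y \<inter> B2 \<subseteq> cl ?T"
    using S1 S2 cl1 cl2 assms(1,2) by (intro span_half; auto)+
  then have "Y \<subseteq> cl ?T"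
    using assms(10) by blast
  moreover have "finite X"
    using assms(1,2,9,10) by (meson finite_UnI finite_subset)
  ultimately have "pg_dim cl X \<le> card ?T"
    using assms(9,10) by (intro pg_dim_le_card[OF pg T]) auto
  with card show ?thesis
    by linarith
qed

theorem lemma6p7:
  fixes B1 B2 :: "'a set" and R1 R2 :: "'a set set"
  assumes C1: "in_C B1 R1" and C2: "in_C B2 R2"
    and agree: "restr R1 (B1 \<inter> B2) = restr R2 (B1 \<inter> B2)"
    and ss1: "self_suff (B1 \<inter> B2) B1 R1"
    and ss2: "self_suff (B1 \<inter> B2) B2 R2"
  defines "A0 \<equiv> B1 \<inter> B2"
    and "C \<equiv> B1 \<union> B2"
    and "R \<equiv> R1 \<union> R2"
  defines "\<eta> \<equiv> \<lambda>X. ss_dim B1 R1 (X \<inter> B1) + ss_dim B2 R2 (X \<inter> B2)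
                    - ss_dim A0 (restr R1 A0) (X \<inter> A0)"
  defines "\<zeta> \<equiv> \<lambda>X. Min {\<eta> Y | Y. X \<subseteq> Y \<and> Y \<subseteq> C}"
  shows "(\<forall>X. X \<subseteq> C \<longrightarrow> ss_dim C R X = \<zeta> X) \<and>
         (\<forall>cl'. pregeometry C cl'
             \<and> (\<forall>X. X \<subseteq> B1 \<longrightarrow> cl' X \<inter> B1 = ss_cl B1 R1 X)
             \<and> (\<forall>X. X \<subseteq> B2 \<longrightarrow> cl' X \<inter> B2 = ss_cl B2 R2 X)
           \<longrightarrow> (\<forall>X. X \<subseteq> C \<longrightarrow> int (pg_dim cl' X) \<le> \<zeta> X))"
proof -
  have fin: "finite B1" "finite B2" and sub1: "\<forall>r\<in>R1. r \<subseteq> B1" and sub2: "\<forall>r\<in>R2. r \<subseteq> B2"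
    using C1 C2 unfolding in_C_def by auto
  have delta1: "delta R W = delta R1 W" if "W \<subseteq> B1" for W
    unfolding R_def using delta_Un_left[OF sub2 agree that] .
  have delta2: "delta R W = delta R2 W" if "W \<subseteq> B2" for W
    unfolding R_def using delta_Un_right[OF sub1 agree that] .
  have delta0: "delta R W = delta (restr R1 A0) W" if "W \<subseteq> A0" for W
    using that delta1[of W] delta_restr[OF that, of R1] unfolding A0_def by simp
  have "ss_dim B1 R1 = ss_dim B1 R" "ss_dim B2 R2 = ss_dim B2 R" "ss_dim A0 (restr R1 A0) = ss_dim A0 R"
    by (rule ss_dim_cong; simp add: delta1 delta2 delta0)+
  then have zeta: "\<zeta> X = Min {amalgam_dim B1 B2 R Y | Y. X \<subseteq> Y \<and> Y \<subseteq> B1 \<union> B2}" for X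
    unfolding \<zeta>_def \<eta>_def amalgam_dim_def C_def by (simp add: A0_def)
  have "self_suff A0 B1 R1 = self_suff A0 B1 R" "self_suff A0 B2 R2 = self_suff A0 B2 R"
    "ss_cl B1 R1 = ss_cl B1 R" "ss_cl B2 R2 = ss_cl B2 R"
    by (rule self_suff_cong ss_cl_cong; simp add: delta1 delta2)+
  moreover have "0 \<le> delta R W" if "W \<subseteq> A0" for W
    using that C1 delta1[of W] unfolding in_C_def A0_def by auto
  ultimately have pg_bound: "int (pg_dim cl X) \<le> amalgam_dim B1 B2 R Y"
    if "pregeometry C cl" "\<forall>S. S \<subseteq> B1 \<longrightarrow> cl S \<inter> B1 = ss_cl B1 R1 S"
      "\<forall>S. S \<subseteq> B2 \<longrightarrow> cl S \<inter> B2 = ss_cl B2 R2 S" "X \<subseteq> Y" "Y \<subseteq> C" for cl X Y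
    using pg_dim_le_amalgam_dim[OF fin _ _ _ _ _ _ that(4)] ss1 ss2 that unfolding A0_def C_def by simp
  have free: "\<forall>r\<in>R. r \<subseteq> B1 \<or> r \<subseteq> B2"
    using sub1 sub2 unfolding R_def by blast
  show ?thesis
  proof (intro conjI allI impI)
    show "ss_dim C R X = \<zeta> X" if "X \<subseteq> C" for X
      using ss_dim_free_amalgam[OF fin free] that unfolding zeta C_def by simp
    show "int (pg_dim cl X) \<le> \<zeta> X"
      if "pregeometry C cl \<and> (\<forall>X. X \<subseteq> B1 \<longrightarrow> cl X \<inter> B1 = ss_cl B1 R1 X)
          \<and> (\<forall>X. X \<subseteq> B2 \<longrightarrow> cl X \<inter> B2 = ss_cl B2 R2 X)" and "X \<subseteq> C" for cl X
      unfolding zeta using that pg_bound[of cl X] fin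
      by (subst Min_ge_iff) (auto simp: C_def finite_image_supersets)
  qed
qed

end
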